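(* Let $(M,d)$ be a complete pointed metric space and let $\nu$ be a positive Radon measure on $\beta\widetilde{M}$. Then there exists a $\preccurlyeq$-minimal positive Radon measure $\mu$ on $\beta\widetilde{M}$ with $\mu\preccurlyeq\nu$.
   Context: $\widetilde{M}=\{(x,y)\in M\times M:x\ne y\}$, $\beta\widetilde{M}$ its Stone–Čech compactification; Radon measures identified with $C(\beta\widetilde{M})^*$. $G$ is the set of $g\in C(\beta\widetilde{M})$ with $d(x,y)g(x,y)\le d(x,u)g(x,u)+d(u,y)g(u,y)$ for all distinct $x,u,y\in M$. For positive Radon measures, $\mu\preccurlyeq\nu$ iff $\int g\,d\mu\le\int g\,d\nu$ for all $g\in G$; $\mu$ is $\preccurlyeq$-minimal if every positive $\lambda$ with $\lambda\preccurlyeq\mu$ satisfies $\mu\preccurlyeq\lambda$. Throughout, $M$ has at least three distinct points. *)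

theory Defs
  imports "HOL-Analysis.Analysis"
begin

definition offdiag :: "('a \<times> 'a) set" where
  "offdiag = {p. fst p \<noteq> snd p}"

text \<open>Bounded continuous real functions on M~; by the universal property of
  the Stone-Cech compactification these are exactly the restrictions to M~ of
  the elements of C(beta M~).\<close>
definition Cb :: "(('a::metric_space \<times> 'a) \<Rightarrow> real) set" where
  "Cb = {f. continuous_on offdiag f \<and> bounded (f ` offdiag)}"

text \<open>Positive Radon measures on beta M~, identified with positive linear
  functionals on C(beta M~) = C_b(M~) (Riesz; positive functionals are
  automatically bounded).\<close>
definition positive_radon :: "((('a::metric_space \<times> 'a) \<Rightarrow> real) \<Rightarrow> real) \<Rightarrow> bool" where
  "positive_radon \<mu> \<longleftrightarrow>
     (\<forall>f\<in>Cb. \<forall>g\<in>Cb. \<mu> (\<lambda>p. f p + g p) = \<mu> f + \<mu> g) \<and>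
     (\<forall>f\<in>Cb. \<forall>c. \<mu> (\<lambda>p. c * f p) = c * \<mu> f) \<and>
     (\<forall>f\<in>Cb. (\<forall>p\<in>offdiag. 0 \<le> f p) \<longrightarrow> 0 \<le> \<mu> f)"

definition Gcone :: "(('a::metric_space \<times> 'a) \<Rightarrow> real) set" where
  "Gcone = {g\<in>Cb. \<forall>x u y. x \<noteq> u \<and> u \<noteq> y \<and> x \<noteq> y \<longrightarrow>
      dist x y * g (x, y) \<le> dist x u * g (x, u) + dist u y * g (u, y)}"

definition preceq :: "((('a::metric_space \<times> 'a) \<Rightarrow> real) \<Rightarrow> real) \<Rightarrow> ((('a \<times> 'a) \<Rightarrow> real) \<Rightarrow> real) \<Rightarrow> bool"
  (infix "\<preccurlyeq>" 50) where
  "\<mu> \<preccurlyeq> \<nu> \<longleftrightarrow> (\<forall>g\<in>Gcone. \<mu> g \<le> \<nu> g)"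

definition preceq_minimal :: "((('a::metric_space \<times> 'a) \<Rightarrow> real) \<Rightarrow> real) \<Rightarrow> bool" where
  "preceq_minimal \<mu> \<longleftrightarrow> (\<forall>\<kappa>. positive_radon \<kappa> \<and> \<kappa> \<preccurlyeq> \<mu> \<longrightarrow> \<mu> \<preccurlyeq> \<kappa>)"

end

theory Submission
  imports Defs
begin

text \<open>Only the values of a functional on \<open>Cb\<close> matter, so normalise them to 0
  elsewhere. The normalised positive functionals below \<open>\<nu>\<close> satisfy
  \<open>\<bar>\<mu> f\<bar> \<le> sup \<bar>f\<bar> \<cdot> \<nu> 1\<close>, because the constant 1 lies in \<open>G\<close>; so they form a
  closed subset of a product of compact intervals, compact by Tychonoff. On a
  compact space a preorder with closed lower sets has a minimal element: by the
  finite intersection property every chain has a lower bound, and Zorn's lemma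
  applies. Normalising does not change the values on \<open>G\<close>, so a minimal
  normalised functional is minimal among all positive functionals.\<close>

lemma compact_preorder_has_minimal:
  fixes K :: "'a::topological_space set" and le :: "'a \<Rightarrow> 'a \<Rightarrow> bool" (infix \<open>\<sqsubseteq>\<close> 50)
  assumes "compact K" "K \<noteq> {}"
    and refl: "\<And>x. x \<in> K \<Longrightarrow> x \<sqsubseteq> x"
    and trans: "\<And>x y z. x \<sqsubseteq> y \<Longrightarrow> y \<sqsubseteq> z \<Longrightarrow> x \<sqsubseteq> z"
    and closed: "\<And>y. y \<in> K \<Longrightarrow> closed {x. x \<sqsubseteq> y}"
  shows "\<exists>m\<in>K. \<forall>x\<in>K. x \<sqsubseteq> m \<longrightarrow> m \<sqsubseteq> x"
proof -
  \<comment> \<open>minimal elements are those with a maximal up-set, so Zorn's lemma for \<open>\<subseteq>\<close> applies\<close>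
  define U where "U y = {x\<in>K. y \<sqsubseteq> x}" for y
  have U_subset_iff: "U y \<subseteq> U z \<longleftrightarrow> z \<sqsubseteq> y" if "y \<in> K" for y z
  proof
    assume "U y \<subseteq> U z"
    moreover have "y \<in> U y" using that refl by (simp add: U_def)
    ultimately show "z \<sqsubseteq> y" by (auto simp: U_def)
  next
    assume "z \<sqsubseteq> y"
    then show "U y \<subseteq> U z" unfolding U_def by (blast intro: trans)
  qed
  have "\<exists>V\<in>U ` K. \<forall>X\<in>C. X \<subseteq> V" if C: "C \<in> chains (U ` K)" for C
  proof -
    have C_sub: "C \<subseteq> U ` K" and C_total: "\<And>X Y. X \<in> C \<Longrightarrow> Y \<in> C \<Longrightarrow> X \<subseteq> Y \<or> Y \<subseteq> X"
      using C by (simp_all add: chains_def chain_subset_def)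
    define D where "D = {y\<in>K. U y \<in> C}"
    define L where "L y = {x. x \<sqsubseteq> y}" for y
    have "K \<inter> (\<Inter>y\<in>D. L y) \<noteq> {}"
    proof (rule compact_imp_fip_image[OF \<open>compact K\<close>])
      show "closed (L y)" if "y \<in> D" for y
        using that closed by (simp add: D_def L_def)
    next
      fix D' assume D': "finite D'" "D' \<subseteq> D"
      show "K \<inter> (\<Inter>y\<in>D'. L y) \<noteq> {}"
      proof (cases "D' = {}")
        case True
        then show ?thesis using \<open>K \<noteq> {}\<close> by simp
      next
        case False
        have "subset.chain UNIV (U ` D')"
          unfolding subset_chain_def using D'(2) C_total by (auto simp: D_def)
        then have "\<Union>(U ` D') \<in> U ` D'"
          using D' False by (intro Union_in_chain) auto
        then obtain y0 where y0: "y0 \<in> D'" "\<And>y. y \<in> D' \<Longrightarrow> U y \<subseteq> U y0" by blast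
        have "y0 \<in> K" using y0(1) D'(2) by (auto simp: D_def)
        have "y0 \<sqsubseteq> y" if "y \<in> D'" for y
          using y0(2)[OF that] that D'(2) U_subset_iff by (auto simp: D_def)
        then have "y0 \<in> K \<inter> (\<Inter>y\<in>D'. L y)"
          using \<open>y0 \<in> K\<close> by (simp add: L_def)
        then show ?thesis by blast
      qed
    qed
    then obtain m where m: "m \<in> K" "\<And>y. y \<in> D \<Longrightarrow> m \<sqsubseteq> y"
      by (auto simp: L_def)
    have "X \<subseteq> U m" if "X \<in> C" for X
    proof -
      obtain y where "y \<in> K" "X = U y" using C_sub \<open>X \<in> C\<close> by blast
      then show ?thesis using m \<open>X \<in> C\<close> U_subset_iff by (auto simp: D_def)
    qed
    then show ?thesis using m(1) by blast
  qed
  from Zorn_Lemma2[OF ballI, OF this] obtain m where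
    "m \<in> K" and max: "\<And>x. x \<in> K \<Longrightarrow> U m \<subseteq> U x \<Longrightarrow> U x = U m"
    by blast
  have "m \<sqsubseteq> x" if "x \<in> K" "x \<sqsubseteq> m" for x
  proof -
    have "U x = U m" using that \<open>m \<in> K\<close> by (intro max) (auto simp: U_subset_iff)
    then show ?thesis using that refl by (auto simp: U_def)
  qed
  then show ?thesis using \<open>m \<in> K\<close> by blast
qed

lemma Cb_const: "(\<lambda>_. c) \<in> Cb"
  unfolding Cb_def by (auto intro!: continuous_intros simp: image_constant_conv)

lemma Cb_add: "f \<in> Cb \<Longrightarrow> g \<in> Cb \<Longrightarrow> (\<lambda>p. f p + g p) \<in> Cb"
  unfolding Cb_def by (auto intro!: continuous_intros bounded_plus_comp)

lemma Cb_scale: "f \<in> Cb \<Longrightarrow> (\<lambda>p. c * f p) \<in> Cb"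
  using bounded_scaling[of "f ` offdiag" c] unfolding Cb_def
  by (auto intro!: continuous_intros simp: image_image)

lemma Cb_diff: "f \<in> Cb \<Longrightarrow> g \<in> Cb \<Longrightarrow> (\<lambda>p. f p - g p) \<in> Cb"
  using Cb_add[of f "\<lambda>p. (-1) * g p"] Cb_scale[of g "-1"] by simp

lemma Cb_bounded_by: "f \<in> Cb \<Longrightarrow> \<exists>c\<ge>0. \<forall>p\<in>offdiag. \<bar>f p\<bar> \<le> c"
  unfolding Cb_def bounded_pos by (auto intro: less_imp_le)

lemma const_one_in_Gcone: "(\<lambda>_. 1) \<in> Gcone"
  unfolding Gcone_def by (auto simp: Cb_const dist_triangle)

lemma Gcone_subset_Cb: "Gcone \<subseteq> Cb"
  unfolding Gcone_def by auto

lemma preceq_refl: "\<mu> \<preccurlyeq> \<mu>"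
  unfolding preceq_def by simp

lemma preceq_trans: "\<mu> \<preccurlyeq> \<kappa> \<Longrightarrow> \<kappa> \<preccurlyeq> \<nu> \<Longrightarrow> \<mu> \<preccurlyeq> \<nu>"
  unfolding preceq_def by force

lemma closed_preceq_below: "closed {\<kappa>. \<kappa> \<preccurlyeq> \<mu>}" (is "closed ?P")
proof -
  have "?P = (\<Inter>g\<in>Gcone. {\<kappa>. \<kappa> g \<le> \<mu> g})"
    unfolding preceq_def by auto
  then show ?thesis
    by (simp add: closed_INT closed_Collect_le)
qed

context
  fixes \<mu> :: "(('a::metric_space \<times> 'a) \<Rightarrow> real) \<Rightarrow> real"
  assumes \<mu>: "positive_radon \<mu>"
begin

lemma positive_radon_add: "f \<in> Cb \<Longrightarrow> g \<in> Cb \<Longrightarrow> \<mu> (\<lambda>p. f p + g p) = \<mu> f + \<mu> g"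
  using \<mu> unfolding positive_radon_def by blast

lemma positive_radon_scale: "f \<in> Cb \<Longrightarrow> \<mu> (\<lambda>p. c * f p) = c * \<mu> f"
  using \<mu> unfolding positive_radon_def by blast

lemma positive_radon_nonneg: "f \<in> Cb \<Longrightarrow> (\<And>p. p \<in> offdiag \<Longrightarrow> 0 \<le> f p) \<Longrightarrow> 0 \<le> \<mu> f"
  using \<mu> unfolding positive_radon_def by blast

lemma positive_radon_diff: "f \<in> Cb \<Longrightarrow> g \<in> Cb \<Longrightarrow> \<mu> (\<lambda>p. f p - g p) = \<mu> f - \<mu> g"
  using positive_radon_add[of f "\<lambda>p. - g p"] positive_radon_scale[of g "-1"] Cb_scale[of g "-1"]
  by simp

lemma positive_radon_mono:
  assumes "f \<in> Cb" "g \<in> Cb" "\<And>p. p \<in> offdiag \<Longrightarrow> f p \<le> g p"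
  shows "\<mu> f \<le> \<mu> g"
proof -
  have "0 \<le> \<mu> (\<lambda>p. g p - f p)"
    using assms(3) by (intro positive_radon_nonneg[OF Cb_diff[OF assms(2,1)]])
      (simp only: diff_ge_0_iff_ge)
  then show ?thesis using positive_radon_diff[OF assms(2,1)] by linarith
qed

lemma positive_radon_const: "\<mu> (\<lambda>_. c) = c * \<mu> (\<lambda>_. 1)"
  using positive_radon_scale[OF Cb_const, of c 1] by simp

lemma positive_radon_abs_le:
  assumes "f \<in> Cb" "\<And>p. p \<in> offdiag \<Longrightarrow> \<bar>f p\<bar> \<le> c"
  shows "\<bar>\<mu> f\<bar> \<le> c * \<mu> (\<lambda>_. 1)"
proof -
  have bounds: "- c \<le> f p" "f p \<le> c" if "p \<in> offdiag" for p
    using assms(2)[OF that] by (simp_all add: abs_le_iff)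
  have "\<mu> f \<le> \<mu> (\<lambda>_. c)"
    by (rule positive_radon_mono[OF assms(1) Cb_const]) (rule bounds)
  moreover have "\<mu> (\<lambda>_. - c) \<le> \<mu> f"
    by (rule positive_radon_mono[OF Cb_const assms(1)]) (rule bounds)
  moreover have "\<mu> (\<lambda>_. - c) = - (c * \<mu> (\<lambda>_. 1))"
    using positive_radon_const[of "- c"] by simp
  ultimately show ?thesis
    unfolding abs_le_iff positive_radon_const[of c] by linarith
qed

end

lemma closed_positive_radon: "closed {\<mu>. positive_radon \<mu>}" (is "closed ?P")
proof -
  have "?P =
    (\<Inter>f\<in>Cb. \<Inter>g\<in>Cb. {\<mu>. \<mu> (\<lambda>p. f p + g p) = \<mu> f + \<mu> g}) \<inter>
    (\<Inter>f\<in>Cb. \<Inter>c. {\<mu>. \<mu> (\<lambda>p. c * f p) = c * \<mu> f}) \<inter>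
    (\<Inter>f\<in>{f\<in>Cb. \<forall>p\<in>offdiag. 0 \<le> f p}. {\<mu>. 0 \<le> \<mu> f})"
    unfolding positive_radon_def by auto
  moreover have "closed \<dots>"
    by (intro closed_Int closed_INT ballI closed_Collect_eq closed_Collect_le
        continuous_intros continuous_on_product_coordinates)
  ultimately show ?thesis by (simp only:)
qed

definition restrict_Cb ::
    "((('a::metric_space \<times> 'a) \<Rightarrow> real) \<Rightarrow> real) \<Rightarrow> ((('a \<times> 'a) \<Rightarrow> real) \<Rightarrow> real)"
  where "restrict_Cb \<mu> f = (if f \<in> Cb then \<mu> f else 0)"

lemma positive_radon_restrict_Cb: "positive_radon \<mu> \<Longrightarrow> positive_radon (restrict_Cb \<mu>)"
  unfolding positive_radon_def restrict_Cb_def by (auto simp: Cb_add Cb_scale)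

lemma restrict_Cb_outside_Cb: "f \<notin> Cb \<Longrightarrow> restrict_Cb \<mu> f = 0"
  by (simp add: restrict_Cb_def)

lemma restrict_Cb_Gcone: "g \<in> Gcone \<Longrightarrow> restrict_Cb \<mu> g = \<mu> g"
  using Gcone_subset_Cb by (auto simp: restrict_Cb_def)

lemma restrict_Cb_preceq_iff: "restrict_Cb \<mu> \<preccurlyeq> \<nu> \<longleftrightarrow> \<mu> \<preccurlyeq> \<nu>"
  unfolding preceq_def by (simp add: restrict_Cb_Gcone)

lemma preceq_restrict_Cb_iff: "\<nu> \<preccurlyeq> restrict_Cb \<mu> \<longleftrightarrow> \<nu> \<preccurlyeq> \<mu>"
  unfolding preceq_def by (simp add: restrict_Cb_Gcone)

definition radon_below ::
    "((('a::metric_space \<times> 'a) \<Rightarrow> real) \<Rightarrow> real) \<Rightarrow> ((('a \<times> 'a) \<Rightarrow> real) \<Rightarrow> real) set"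
  where "radon_below \<nu> = {\<mu>. positive_radon \<mu> \<and> \<mu> \<preccurlyeq> \<nu> \<and> (\<forall>f. f \<notin> Cb \<longrightarrow> \<mu> f = 0)}"

lemma restrict_Cb_in_radon_below:
  "positive_radon \<kappa> \<Longrightarrow> \<kappa> \<preccurlyeq> \<nu> \<Longrightarrow> restrict_Cb \<kappa> \<in> radon_below \<nu>"
  by (simp add: radon_below_def positive_radon_restrict_Cb restrict_Cb_preceq_iff
      restrict_Cb_outside_Cb)

lemma compact_radon_below:
  fixes \<nu> :: "(('a::metric_space \<times> 'a) \<Rightarrow> real) \<Rightarrow> real"
  assumes \<nu>: "positive_radon \<nu>"
  shows "compact (radon_below \<nu>)" (is "compact ?P")
proof -
  obtain B :: "(('a \<times> 'a) \<Rightarrow> real) \<Rightarrow> real"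
    where B: "\<And>f. f \<in> Cb \<Longrightarrow> 0 \<le> B f \<and> (\<forall>p\<in>offdiag. \<bar>f p\<bar> \<le> B f)"
    using Cb_bounded_by by metis
  define S where "S f = (if f \<in> Cb then {- (B f * \<nu> (\<lambda>_. 1)) .. B f * \<nu> (\<lambda>_. 1)} else {0})"
    for f :: "('a \<times> 'a) \<Rightarrow> real"
  have "compact (Pi\<^sub>E UNIV S)"
    using compactin_PiE[of "\<lambda>_. euclidean" UNIV S] by (simp add: euclidean_product_topology S_def)
  moreover have "?P \<subseteq> Pi\<^sub>E UNIV S"
  proof
    fix \<mu> assume "\<mu> \<in> ?P"
    then have \<mu>: "positive_radon \<mu>" "\<mu> \<preccurlyeq> \<nu>" "\<And>f. f \<notin> Cb \<Longrightarrow> \<mu> f = 0"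
      by (auto simp: radon_below_def)
    have mass: "\<mu> (\<lambda>_. 1) \<le> \<nu> (\<lambda>_. 1)"
      using \<mu>(2) const_one_in_Gcone by (auto simp: preceq_def)
    have bound: "\<bar>\<mu> f\<bar> \<le> B f * \<nu> (\<lambda>_. 1)" if "f \<in> Cb" for f
    proof -
      have "\<bar>\<mu> f\<bar> \<le> B f * \<mu> (\<lambda>_. 1)"
        using B[OF that] by (intro positive_radon_abs_le[OF \<mu>(1) that]) blast
      also have "\<dots> \<le> B f * \<nu> (\<lambda>_. 1)"
        using B[OF that] mass by (intro mult_left_mono) auto
      finally show ?thesis .
    qed
    have "\<mu> f \<in> S f" for f
    proof (cases "f \<in> Cb")
      case True
      then show ?thesis using bound[OF True] by (simp add: S_def abs_le_iff)
    qed (simp add: S_def \<mu>(3))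
    then show "\<mu> \<in> Pi\<^sub>E UNIV S" by (simp add: PiE_iff)
  qed
  moreover have "?P = {\<mu>. positive_radon \<mu>} \<inter> {\<mu>. \<mu> \<preccurlyeq> \<nu>} \<inter> (\<Inter>f\<in>- Cb. {\<mu>. \<mu> f = 0})"
    by (auto simp: radon_below_def)
  moreover have "closed \<dots>"
    by (intro closed_Int closed_positive_radon closed_preceq_below closed_INT ballI
        closed_Collect_eq continuous_on_const continuous_on_product_coordinates)
  ultimately show ?thesis
    using closed_Int_compact[of ?P "Pi\<^sub>E UNIV S"] by (simp add: Int_absorb2)
qed

theorem proposition3p10:
  fixes \<nu> :: "(('a::complete_space \<times> 'a) \<Rightarrow> real) \<Rightarrow> real"
  assumes three: "\<exists>x u y :: 'a. x \<noteq> u \<and> u \<noteq> y \<and> x \<noteq> y"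
    and pos: "positive_radon \<nu>"
  shows "\<exists>\<mu>. positive_radon \<mu> \<and> preceq_minimal \<mu> \<and> \<mu> \<preccurlyeq> \<nu>"
proof -
  have "compact (radon_below \<nu>)" "radon_below \<nu> \<noteq> {}"
    using compact_radon_below[OF pos] restrict_Cb_in_radon_below[OF pos preceq_refl] by blast+
  then have "\<exists>\<mu>\<in>radon_below \<nu>. \<forall>\<kappa>\<in>radon_below \<nu>. \<kappa> \<preccurlyeq> \<mu> \<longrightarrow> \<mu> \<preccurlyeq> \<kappa>"
    by (rule compact_preorder_has_minimal[OF _ _ preceq_refl preceq_trans closed_preceq_below])
  then obtain \<mu> where \<mu>: "\<mu> \<in> radon_below \<nu>"
    and min: "\<And>\<kappa>. \<kappa> \<in> radon_below \<nu> \<Longrightarrow> \<kappa> \<preccurlyeq> \<mu> \<Longrightarrow> \<mu> \<preccurlyeq> \<kappa>"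
    by blast
  have "\<mu> \<preccurlyeq> \<kappa>" if "positive_radon \<kappa>" "\<kappa> \<preccurlyeq> \<mu>" for \<kappa>
  proof -
    have "\<mu> \<preccurlyeq> \<nu>" using \<mu> by (simp add: radon_below_def)
    then have "restrict_Cb \<kappa> \<in> radon_below \<nu>"
      by (rule restrict_Cb_in_radon_below[OF that(1) preceq_trans[OF that(2)]])
    then have "\<mu> \<preccurlyeq> restrict_Cb \<kappa>"
      using min that(2) by (simp add: restrict_Cb_preceq_iff)
    then show ?thesis by (simp add: preceq_restrict_Cb_iff)
  qed
  then show ?thesis
    using \<mu> by (auto simp: preceq_minimal_def radon_below_def)
qed

end
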